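(* In the FIND setting of the context, let $\mathcal C_r$ and $\mathcal C_s$ be leaf clusters of $\mathcal T$, choose consistent orderings of $\mathcal T_r^+$ and $\mathcal T_s^+$, and let $\boldsymbol\Sigma_{r,g+}$, $\boldsymbol\Sigma_{s,g+}$ denote the matrices produced by the elimination process for target $r$ and target $s$. Then for every cluster $\mathcal C_i$ that is a node of both $\mathcal T_r^+$ and $\mathcal T_s^+$, $$\boldsymbol\Sigma_{r,i+}(\mathcal B_i,\mathcal B_i)=\boldsymbol\Sigma_{s,i+}(\mathcal B_i,\mathcal B_i).$$
   Context: Setting (FIND). $\mathcal M$ is a finite set of mesh nodes; $\mathbf A$ is an invertible complex matrix indexed by $\mathcal M\times\mathcal M$, structurally symmetric ($A_{ij}\neq0\iff A_{ji}\neq0$); distinct nodes $i,j$ are connected if $A_{ij}\neq 0$. $\boldsymbol\Sigma$ is a complex matrix indexed by $\mathcal M\times\mathcal M$ with $\Sigma_{ij}=0$ whenever $i\neq j$ and $i,j$ are not connected. Matrices are indexed by $\mathcal M$ itself (the ordering only determines the sequence of eliminations). $\dagger$ is conjugate transpose, $\mathbf X^{-\dagger}=(\mathbf X^{-1})^\dagger$. $\mathbf X(X,Y)$ is the submatrix with rows in $X$, columns in $Y$. For a cluster $\mathcal C\subseteq\mathcal M$: boundary set $\mathcal B_{\mathcal C}=\{i\in\mathcal C: A_{ij}\neq 0\text{ for some } j\notin\mathcal C\}$, inner set $\mathcal I_{\mathcal C}=\mathcal C\setminus\mathcal B_{\mathcal C}$; for $\mathcal C_g$ write $\mathcal B_g,\mathcal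 I_g$. Cluster tree: $\mathcal T$ is a rooted binary tree of clusters with root $\mathcal M$, each non-leaf cluster the disjoint union of its two children. For a leaf $\mathcal C_r$ with path $r=a_0,\dots,a_d$ (root) and $b_k$ the sibling of $a_k$, the augmented tree $\mathcal T_r^+$ has root $\mathcal C_{-r}=\mathcal M\setminus\mathcal C_r$; for $0\le k\le d-2$, $\mathcal C_{-a_k}=\mathcal M\setminus\mathcal C_{a_k}$ has children $\mathcal C_{b_k}$ and $\mathcal C_{-a_{k+1}}$, with $\mathcal C_{-a_{d-1}}$ identified with $\mathcal C_{b_{d-1}}$; each basic cluster $\mathcal C_{b_k}$ carries its subtree from $\mathcal T$. (A cluster common to two augmented trees has the same subtree in both.) Private inner nodes: $\mathcal S_g=\mathcal I_g$ for a leaf $g$ of an augmented tree; $\mathcal S_g=\mathcal I_g\setminus(\mathcal I_i\cup\mathcal I_j)$ if $g$ has children $i,j$. Consistent ordering: a total order $g_1,\dots,g_m$ of the nodes of $\mathcal T_r^+$ with every node after all its descendants. Elimination for target $r$: $\mathbf A_{r,g_1}=\mathbf A$, $\boldsymbol\Sigma_{r,g_1}=\boldsymbol\Sigma$; for each $g$ (with $\mathbf A_{r,g}(\mathcal S_g,\mathcal S_g)$ invertible), $\mathcal L_g=\mathbf A_{r,g}(\mathcal B_g,\mathcal S_g)\mathbf A_{r,g}(\mathcal S_g,\mathcal S_g)^{-1}$, $\mathbf L_g$ is the identity on $\mathcal M$ except $\mathbf L_g(\mathcal B_g,\mathcal S_g)=\mathcal L_g$, $\mathbf A_{r,g+}=\mathbf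 L_g^{-1}\mathbf A_{r,g}$, $\boldsymbol\Sigma_{r,g+}=\mathbf L_g^{-1}\boldsymbol\Sigma_{r,g}\mathbf L_g^{-\dagger}$, and $\mathbf A_{r,g_{t+1}}=\mathbf A_{r,g_t+}$, $\boldsymbol\Sigma_{r,g_{t+1}}=\boldsymbol\Sigma_{r,g_t+}$. Thus $\boldsymbol\Sigma_{r,i+}$ is the matrix just after eliminating $\mathcal S_i$. *)

theory Defs
  imports Complex_Main
begin

text \<open>A matrix indexed by (a subset of) the mesh nodes is a function
  'a => 'a => complex; only the entries on the relevant index set matter.\<close>

type_synonym 'a cmat = "'a \<Rightarrow> 'a \<Rightarrow> complex"

definition mmul :: "'a set \<Rightarrow> 'a cmat \<Rightarrow> 'a cmat \<Rightarrow> 'a cmat" where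
  "mmul I X Y = (\<lambda>i j. \<Sum>k\<in>I. X i k * Y k j)"

definition ctr :: "'a cmat \<Rightarrow> 'a cmat" where
  "ctr X = (\<lambda>i j. cnj (X j i))"

definition inverse_on :: "'a set \<Rightarrow> 'a cmat \<Rightarrow> 'a cmat \<Rightarrow> bool" where
  "inverse_on I X Y \<longleftrightarrow>
     (\<forall>i\<in>I. \<forall>j\<in>I. (\<Sum>k\<in>I. X i k * Y k j) = (if i = j then 1 else 0)) \<and>
     (\<forall>i\<in>I. \<forall>j\<in>I. (\<Sum>k\<in>I. Y i k * X k j) = (if i = j then 1 else 0))"

definition invertible_on :: "'a set \<Rightarrow> 'a cmat \<Rightarrow> bool" where
  "invertible_on I X \<longleftrightarrow> (\<exists>Y. inverse_on I X Y)"

definition minv :: "'a set \<Rightarrow> 'a cmat \<Rightarrow> 'a cmat" where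
  "minv I X = (SOME Y. inverse_on I X Y)"

definition bnd :: "'a set \<Rightarrow> 'a cmat \<Rightarrow> 'a set \<Rightarrow> 'a set" where
  "bnd M A C = {i \<in> C. \<exists>j \<in> M - C. A i j \<noteq> 0}"

definition inn :: "'a set \<Rightarrow> 'a cmat \<Rightarrow> 'a set \<Rightarrow> 'a set" where
  "inn M A C = C - bnd M A C"

text \<open>A binary tree whose nodes carry clusters. Nodes are addressed by their
  position, i.e. the path from the root (False = first child, True = second).\<close>

datatype 'a ctree = Lf "'a set" | Nd "'a set" "'a ctree" "'a ctree"

fun rcl :: "'a ctree \<Rightarrow> 'a set" where
  "rcl (Lf c) = c"
| "rcl (Nd c _ _) = c"

fun wf_ct :: "'a ctree \<Rightarrow> bool" where
  "wf_ct (Lf c) = True"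
| "wf_ct (Nd c l r) \<longleftrightarrow> c = rcl l \<union> rcl r \<and> rcl l \<inter> rcl r = {} \<and> wf_ct l \<and> wf_ct r"

definition cluster_tree :: "'a set \<Rightarrow> 'a ctree \<Rightarrow> bool" where
  "cluster_tree M t \<longleftrightarrow> rcl t = M \<and> wf_ct t"

fun subt :: "'a ctree \<Rightarrow> bool list \<Rightarrow> 'a ctree option" where
  "subt t [] = Some t"
| "subt (Lf c) (b # p) = None"
| "subt (Nd c l r) (b # p) = subt (if b then r else l) p"

definition pos :: "'a ctree \<Rightarrow> bool list set" where
  "pos t = {p. subt t p \<noteq> None}"

definition is_leaf_pos :: "'a ctree \<Rightarrow> bool list \<Rightarrow> bool" where
  "is_leaf_pos t p \<longleftrightarrow> (\<exists>c. subt t p = Some (Lf c))"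

definition clu :: "'a ctree \<Rightarrow> bool list \<Rightarrow> 'a set" where
  "clu t p = rcl (the (subt t p))"

definition sib :: "bool list \<Rightarrow> bool list" where
  "sib a = butlast a @ [\<not> last a]"

text \<open>Nodes of augmented trees: a basic cluster of the cluster tree (given by its
  position), or the complement cluster C_{-a} = M - C_a of a position a.\<close>
datatype anode = Bas "bool list" | Cmp "bool list"

text \<open>The node standing for C_{-a}; C_{-a} with a a child of the root is
  identified with the basic cluster of the sibling of a.\<close>
definition cnode :: "bool list \<Rightarrow> anode" where
  "cnode a = (if length a \<le> 1 then Bas (sib a) else Cmp a)"

text \<open>Nodes of the augmented tree T_r^+ for the leaf at position r
  (the ancestors a_k of r are the nonempty prefixes take k r, their siblings
  b_k are sib (take k r)).\<close>
definition anodes :: "'a ctree \<Rightarrow> bool list \<Rightarrow> anode set" where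
  "anodes t r =
     {Cmp (take k r) | k. 2 \<le> k \<and> k \<le> length r} \<union>
     {Bas q | q k u. 1 \<le> k \<and> k \<le> length r \<and> q = sib (take k r) @ u \<and> q \<in> pos t}"

text \<open>Children in augmented trees (the same in every augmented tree).\<close>
fun ach :: "'a ctree \<Rightarrow> anode \<Rightarrow> anode set" where
  "ach t (Bas q) = (case subt t q of Some (Nd _ _ _) \<Rightarrow> {Bas (q @ [False]), Bas (q @ [True])}
                                   | _ \<Rightarrow> {})"
| "ach t (Cmp a) = {Bas (sib a), cnode (butlast a)}"

fun acl :: "'a set \<Rightarrow> 'a ctree \<Rightarrow> anode \<Rightarrow> 'a set" where
  "acl M t (Bas q) = clu t q"
| "acl M t (Cmp a) = M - clu t a"

definition priv :: "'a set \<Rightarrow> 'a cmat \<Rightarrow> 'a ctree \<Rightarrow> anode \<Rightarrow> 'a set" where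
  "priv M A t g =
     (if ach t g = {} then inn M A (acl M t g)
      else inn M A (acl M t g) - (\<Union>h\<in>ach t g. inn M A (acl M t h)))"

definition consistent_ordering :: "'a ctree \<Rightarrow> bool list \<Rightarrow> anode list \<Rightarrow> bool" where
  "consistent_ordering t r ord \<longleftrightarrow>
     distinct ord \<and> set ord = anodes t r \<and>
     (\<forall>i < length ord. \<forall>j < length ord.
        (ord ! i, ord ! j) \<in> {(g, h). h \<in> ach t g}\<^sup>+ \<longrightarrow> j < i)"

text \<open>One elimination step at node g, acting on the pair (A_{r,g}, Sigma_{r,g}).
  B_g is the boundary set of C_g w.r.t. the original matrix A0.\<close>
definition elim_step ::
  "'a set \<Rightarrow> 'a cmat \<Rightarrow> 'a ctree \<Rightarrow> anode \<Rightarrow> 'a cmat \<times> 'a cmat \<Rightarrow> 'a cmat \<times> 'a cmat" where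
  "elim_step M A0 t g AS =
     (let A = fst AS; Sig = snd AS;
          B = bnd M A0 (acl M t g); S = priv M A0 t g;
          Lc = (\<lambda>i j. \<Sum>k\<in>S. A i k * minv S A k j);
          L = (\<lambda>i j. if i \<in> B \<and> j \<in> S then Lc i j else if i = j then 1 else 0);
          Li = minv M L
      in (mmul M Li A, mmul M (mmul M Li Sig) (ctr Li)))"

text \<open>State (A_{r,g_{n+1}}, Sigma_{r,g_{n+1}}) after eliminating the first n
  nodes g_1..g_n of the ordering.\<close>
definition elim_run ::
  "'a set \<Rightarrow> 'a cmat \<Rightarrow> 'a cmat \<Rightarrow> 'a ctree \<Rightarrow> anode list \<Rightarrow> nat \<Rightarrow> 'a cmat \<times> 'a cmat" where
  "elim_run M A0 Sig0 t ord n = foldl (\<lambda>AS g. elim_step M A0 t g AS) (A0, Sig0) (take n ord)"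

definition elim_ok :: "'a set \<Rightarrow> 'a cmat \<Rightarrow> 'a cmat \<Rightarrow> 'a ctree \<Rightarrow> anode list \<Rightarrow> bool" where
  "elim_ok M A0 Sig0 t ord \<longleftrightarrow>
     (\<forall>n < length ord. invertible_on (priv M A0 t (ord ! n)) (fst (elim_run M A0 Sig0 t ord n)))"

definition sig_plus :: "'a set \<Rightarrow> 'a cmat \<Rightarrow> 'a cmat \<Rightarrow> 'a ctree \<Rightarrow> anode list \<Rightarrow> anode \<Rightarrow> 'a cmat" where
  "sig_plus M A0 Sig0 t ord g = snd (elim_run M A0 Sig0 t ord (Suc (THE n. n < length ord \<and> ord ! n = g)))"

end

theory Submission
  imports Defs "HOL-Library.Sublist"
begin

text \<open>
  Eliminating a node g acts on the pair (A, \<Sigma>) by the transformation P = L_g^-1 = I - E_g,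
  where E_g is supported on B_g \<times> S_g \<subseteq> C_g \<times> C_g and B_g \<inter> S_g = {}. Consequently a step leaves
  the entries on C \<times> C untouched if C_g is disjoint from C, its effect on C \<times> C only depends on
  the entries on C \<times> C if C_g \<subseteq> C, and steps at disjoint clusters commute.
  Two nodes of an augmented tree are either nested or have disjoint clusters. Hence, seen on
  C_i \<times> C_i, the elimination up to i amounts to eliminating the descendants of i and then i
  itself. Two consistent orderings list these descendants in orders that differ only by swaps
  of incomparable, hence disjoint and commuting, nodes, and the descendants of i are the same
  in every augmented tree containing i.
\<close>

section \<open>Matrices on an index set\<close>

definition agree_on :: "'a set \<Rightarrow> 'a cmat \<Rightarrow> 'a cmat \<Rightarrow> bool" where
  "agree_on C X Y \<longleftrightarrow> (\<forall>x\<in>C. \<forall>y\<in>C. X x y = Y x y)"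

lemma mmul_assoc: "mmul M (mmul M X Y) Z = mmul M X (mmul M Y Z)"
  unfolding mmul_def sum_distrib_left sum_distrib_right mult.assoc by (intro ext) (rule sum.swap)

lemma ctr_mmul: "ctr (mmul M X Y) = mmul M (ctr Y) (ctr X)"
  unfolding mmul_def ctr_def by (auto intro!: ext simp: mult.commute)

lemma agree_on_mmul:
  "agree_on M X X' \<Longrightarrow> agree_on M Y Y' \<Longrightarrow> agree_on M (mmul M X Y) (mmul M X' Y')"
  unfolding agree_on_def mmul_def by (auto intro!: sum.cong)

lemma agree_on_ctr: "agree_on M X X' \<Longrightarrow> agree_on M (ctr X) (ctr X')"
  unfolding agree_on_def ctr_def by auto

lemma inverse_on_unique:
  assumes "finite I" "inverse_on I X Y" "inverse_on I X Z" "i \<in> I" "j \<in> I"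
  shows "Y i j = Z i j"
proof -
  have XZ: "(\<Sum>m\<in>I. X k m * Z m j) = (if k = j then 1 else 0)" if "k \<in> I" for k
    using assms(3) that assms(5) unfolding inverse_on_def by metis
  have YX: "(\<Sum>k\<in>I. Y i k * X k m) = (if i = m then 1 else 0)" if "m \<in> I" for m
    using assms(2) that assms(4) unfolding inverse_on_def by metis
  have "Y i j = (\<Sum>k\<in>I. Y i k * (if k = j then 1 else 0))"
    using assms(1,5) by (simp add: if_distrib[where f="times _"] cong: if_cong)
  also have "\<dots> = (\<Sum>k\<in>I. Y i k * (\<Sum>m\<in>I. X k m * Z m j))"
    by (simp add: XZ)
  also have "\<dots> = (\<Sum>m\<in>I. (\<Sum>k\<in>I. Y i k * X k m) * Z m j)"
    unfolding sum_distrib_left sum_distrib_right mult.assoc by (rule sum.swap)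
  also have "\<dots> = (\<Sum>m\<in>I. (if i = m then 1 else 0) * Z m j)"
    by (simp add: YX)
  also have "\<dots> = Z i j"
    using assms(1,4) by (simp add: if_distrib[where f="\<lambda>x. x * _"] cong: if_cong)
  finally show ?thesis .
qed

lemma minv_eqI:
  assumes "finite I" "inverse_on I X Y" "i \<in> I" "j \<in> I"
  shows "minv I X i j = Y i j"
proof -
  have "inverse_on I X (minv I X)"
    unfolding minv_def using assms(2) by (rule someI[of "inverse_on I X"])
  from inverse_on_unique[OF assms(1) this assms(2-4)] show ?thesis .
qed

lemma sum_id_plus_mult:
  fixes E F :: "'a cmat"
  assumes "finite M" "x \<in> M" "y \<in> M" "\<forall>m\<in>M. E x m * F m y = 0"
  shows "(\<Sum>m\<in>M. ((if x = m then 1 else 0) + E x m) * ((if m = y then 1 else 0) + F m y))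
     = (if x = y then 1 else 0) + E x y + F x y"
proof -
  have "(\<Sum>m\<in>M. ((if x = m then 1 else 0) + E x m) * ((if m = y then 1 else 0) + F m y))
     = (\<Sum>m\<in>M. (if x = m then (if m = y then 1 else 0) else 0) + (if x = m then F m y else 0)
          + (if m = y then E x m else 0) + E x m * F m y)"
    by (intro sum.cong) (auto simp: algebra_simps)
  moreover have "(\<Sum>m\<in>M. E x m * F m y) = 0"
    using assms(4) by (intro sum.neutral) simp
  ultimately show ?thesis
    using assms(1-3) by (simp add: sum.distrib)
qed

lemma inverse_on_id_minus:
  fixes E :: "'a cmat"
  assumes "finite M" "\<forall>i\<in>M. \<forall>m\<in>M. \<forall>j\<in>M. E i m * E m j = 0"
  shows "inverse_on M (\<lambda>i j. (if i = j then 1 else 0) + E i j) (\<lambda>i j. (if i = j then 1 else 0) - E i j)"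
  unfolding inverse_on_def
proof (intro conjI ballI)
  fix i j assume ij: "i \<in> M" "j \<in> M"
  show "(\<Sum>k\<in>M. ((if i = k then 1 else 0) + E i k) * ((if k = j then 1 else 0) - E k j)) = (if i = j then 1 else 0)"
    using sum_id_plus_mult[of M i j E "\<lambda>i j. - E i j"] assms ij by simp
  show "(\<Sum>k\<in>M. ((if i = k then 1 else 0) - E i k) * ((if k = j then 1 else 0) + E k j)) = (if i = j then 1 else 0)"
    using sum_id_plus_mult[of M i j "\<lambda>i j. - E i j" E] assms ij by simp
qed

section \<open>A single elimination step\<close>

definition agree_pair :: "'a set \<Rightarrow> 'a cmat \<times> 'a cmat \<Rightarrow> 'a cmat \<times> 'a cmat \<Rightarrow> bool" where
  "agree_pair C X Y \<longleftrightarrow> agree_on C (fst X) (fst Y) \<and> agree_on C (snd X) (snd Y)"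

lemma equivp_agree_pair: "equivp (agree_pair C)"
  by (rule equivpI) (auto simp: reflp_def symp_def transp_def agree_pair_def agree_on_def)

lemma agree_pair_subset: "agree_pair C X Y \<Longrightarrow> C' \<subseteq> C \<Longrightarrow> agree_pair C' X Y"
  unfolding agree_pair_def agree_on_def by blast

definition transform_by :: "'a set \<Rightarrow> 'a cmat \<Rightarrow> 'a cmat \<times> 'a cmat \<Rightarrow> 'a cmat \<times> 'a cmat" where
  "transform_by M P X = (mmul M P (fst X), mmul M (mmul M P (snd X)) (ctr P))"

lemma transform_by_mmul:
  "transform_by M P (transform_by M Q X) = transform_by M (mmul M P Q) X"
  unfolding transform_by_def by (simp add: mmul_assoc ctr_mmul)

lemma transform_by_agree_on:
  assumes "agree_on M P P'"
  shows "agree_pair M (transform_by M P X) (transform_by M P' X)"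
proof -
  have refl: "agree_on M Y Y" for Y unfolding agree_on_def by simp
  show ?thesis
    unfolding transform_by_def agree_pair_def
    using assms by (simp add: agree_on_mmul agree_on_ctr refl)
qed

lemma mmul_agree_on_block:
  assumes "finite M" "C \<subseteq> M" "\<forall>x\<in>C. \<forall>m\<in>M - C. P x m = 0" "agree_on C Y Y'"
  shows "agree_on C (mmul M P Y) (mmul M P Y')" and "agree_on C (mmul M Y (ctr P)) (mmul M Y' (ctr P))"
proof -
  have restrict: "sum f M = sum f C" if "\<forall>m\<in>M - C. f m = 0" for f :: "'a \<Rightarrow> complex"
    using assms(1,2) that by (intro sum.mono_neutral_right) auto
  show "agree_on C (mmul M P Y) (mmul M P Y')"
    unfolding agree_on_def mmul_def
  proof (intro ballI)
    fix x y assume "x \<in> C" "y \<in> C"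
    then show "(\<Sum>m\<in>M. P x m * Y m y) = (\<Sum>m\<in>M. P x m * Y' m y)"
      using assms(3,4) by (simp add: restrict agree_on_def)
  qed
  show "agree_on C (mmul M Y (ctr P)) (mmul M Y' (ctr P))"
    unfolding agree_on_def mmul_def ctr_def
  proof (intro ballI)
    fix x y assume "x \<in> C" "y \<in> C"
    then show "(\<Sum>n\<in>M. Y x n * cnj (P y n)) = (\<Sum>n\<in>M. Y' x n * cnj (P y n))"
      using assms(3,4) by (simp add: restrict agree_on_def)
  qed
qed

lemma transform_by_agree_pair:
  assumes "finite M" "C \<subseteq> M" "\<forall>x\<in>C. \<forall>m\<in>M - C. P x m = 0" "agree_pair C X Y"
  shows "agree_pair C (transform_by M P X) (transform_by M P Y)"
  using assms mmul_agree_on_block[OF assms(1-3)]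
  unfolding transform_by_def agree_pair_def by simp

lemma transform_by_id_rows:
  assumes "finite M" "C \<subseteq> M" "\<forall>x\<in>C. \<forall>m\<in>M. P x m = (if x = m then 1 else 0)"
  shows "agree_pair C (transform_by M P X) X"
proof -
  have row: "mmul M P Y x y = Y x y" if "x \<in> C" for Y x y
    using assms that unfolding mmul_def by (auto simp: if_distrib[where f="\<lambda>z. z * _"] cong: if_cong)
  have col: "mmul M Y (ctr P) x y = Y x y" if "y \<in> C" for Y x y
    using assms that unfolding mmul_def ctr_def
    by (auto simp: if_distrib[where f="\<lambda>z. _ * cnj z"] cong: if_cong)
  show ?thesis unfolding transform_by_def agree_pair_def agree_on_def by (simp add: row col)
qed

text \<open>In the notation of the paper, elim_coupling A B S is L_g - I, the block of L_g at
  B_g \<times> S_g, and elim_transform M A B S is L_g^-1.\<close>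

definition elim_coupling :: "'a cmat \<Rightarrow> 'a set \<Rightarrow> 'a set \<Rightarrow> 'a cmat" where
  "elim_coupling A B S i j = (if i \<in> B \<and> j \<in> S then \<Sum>k\<in>S. A i k * minv S A k j else 0)"

definition elim_transform :: "'a set \<Rightarrow> 'a cmat \<Rightarrow> 'a set \<Rightarrow> 'a set \<Rightarrow> 'a cmat" where
  "elim_transform M A B S =
     minv M (\<lambda>i j. if i \<in> B \<and> j \<in> S then \<Sum>k\<in>S. A i k * minv S A k j else if i = j then 1 else 0)"

definition elim_blocks :: "'a set \<Rightarrow> 'a set \<Rightarrow> 'a set \<Rightarrow> 'a cmat \<times> 'a cmat \<Rightarrow> 'a cmat \<times> 'a cmat" where
  "elim_blocks M B S X = transform_by M (elim_transform M (fst X) B S) X"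

lemma elim_step_eq_elim_blocks:
  "elim_step M A0 t g = elim_blocks M (bnd M A0 (acl M t g)) (priv M A0 t g)"
  unfolding elim_step_def elim_blocks_def elim_transform_def transform_by_def Let_def by (rule ext) simp

lemma elim_transform_eq:
  assumes "finite M" "B \<inter> S = {}" "x \<in> M" "y \<in> M"
  shows "elim_transform M A B S x y = (if x = y then 1 else 0) - elim_coupling A B S x y"
proof -
  let ?E = "elim_coupling A B S"
  have "(\<lambda>i j. if i \<in> B \<and> j \<in> S then \<Sum>k\<in>S. A i k * minv S A k j else if i = j then 1 else 0)
      = (\<lambda>i j. (if i = j then 1 else 0) + ?E i j)"
    using assms(2) unfolding elim_coupling_def by (auto intro!: ext)
  moreover have "\<forall>i\<in>M. \<forall>m\<in>M. \<forall>j\<in>M. ?E i m * ?E m j = 0"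
    using assms(2) unfolding elim_coupling_def by auto
  ultimately show ?thesis
    unfolding elim_transform_def using minv_eqI[OF assms(1) inverse_on_id_minus assms(3,4)] assms(1)
    by simp
qed

lemma elim_transform_row_id:
  "finite M \<Longrightarrow> B \<inter> S = {} \<Longrightarrow> x \<in> M \<Longrightarrow> y \<in> M \<Longrightarrow> x \<notin> B \<Longrightarrow>
    elim_transform M A B S x y = (if x = y then 1 else 0)"
  by (simp add: elim_transform_eq elim_coupling_def)

lemma elim_transform_col_id:
  "finite M \<Longrightarrow> B \<inter> S = {} \<Longrightarrow> x \<in> M \<Longrightarrow> y \<in> M \<Longrightarrow> y \<notin> S \<Longrightarrow>
    elim_transform M A B S x y = (if x = y then 1 else 0)"
  by (simp add: elim_transform_eq elim_coupling_def)

lemma elim_transform_cong: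
  assumes "\<forall>x\<in>B \<union> S. \<forall>y\<in>S. A x y = A' x y"
  shows "elim_transform M A B S = elim_transform M A' B S"
proof -
  have "inverse_on S A = inverse_on S A'"
    using assms unfolding inverse_on_def by (intro ext) (auto intro!: sum.cong)
  then have "minv S A = minv S A'" unfolding minv_def by simp
  then have "(\<lambda>i j. if i \<in> B \<and> j \<in> S then \<Sum>k\<in>S. A i k * minv S A k j else if i = j then 1 else 0)
      = (\<lambda>i j. if i \<in> B \<and> j \<in> S then \<Sum>k\<in>S. A' i k * minv S A' k j else if i = j then 1 else 0)"
    using assms by (intro ext) (auto intro!: sum.cong)
  then show ?thesis unfolding elim_transform_def by simp
qed

lemma elim_blocks_outside:
  assumes "finite M" "B \<inter> S = {}" "C \<subseteq> M" "B \<inter> C = {}"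
  shows "agree_pair C (elim_blocks M B S X) X"
  unfolding elim_blocks_def
proof (intro transform_by_id_rows[OF assms(1,3)] ballI)
  fix x m assume "x \<in> C" "m \<in> M"
  then show "elim_transform M (fst X) B S x m = (if x = m then 1 else 0)"
    using assms by (intro elim_transform_row_id) auto
qed

lemma elim_blocks_agree_pair:
  assumes "finite M" "B \<inter> S = {}" "B \<union> S \<subseteq> C" "C \<subseteq> M" "agree_pair C X Y"
  shows "agree_pair C (elim_blocks M B S X) (elim_blocks M B S Y)"
proof -
  have "elim_transform M (fst X) B S = elim_transform M (fst Y) B S"
    using assms(3,5) unfolding agree_pair_def agree_on_def by (intro elim_transform_cong) blast
  moreover have "\<forall>x\<in>C. \<forall>m\<in>M - C. elim_transform M (fst X) B S x m = 0"
  proof (intro ballI)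
    fix x m assume x: "x \<in> C" and m: "m \<in> M - C"
    then have "x \<noteq> m" "m \<notin> S" "x \<in> M" using assms(3,4) by auto
    then show "elim_transform M (fst X) B S x m = 0"
      using assms(1,2) m elim_transform_col_id[of M B S x m] by simp
  qed
  ultimately show ?thesis
    unfolding elim_blocks_def using transform_by_agree_pair[OF assms(1,4) _ assms(5)] by simp
qed

lemma elim_transform_mmul:
  assumes "finite M" "B \<inter> S = {}" "B' \<inter> S' = {}" "S \<inter> B' = {}" "x \<in> M" "y \<in> M"
  shows "mmul M (elim_transform M A B S) (elim_transform M A' B' S') x y
     = (if x = y then 1 else 0) - elim_coupling A B S x y - elim_coupling A' B' S' x y"
proof -
  let ?E = "\<lambda>i j. - elim_coupling A B S i j" and ?F = "\<lambda>i j. - elim_coupling A' B' S' i j"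
  have "mmul M (elim_transform M A B S) (elim_transform M A' B' S') x y
      = (\<Sum>m\<in>M. ((if x = m then 1 else 0) + ?E x m) * ((if m = y then 1 else 0) + ?F m y))"
    unfolding mmul_def using assms by (intro sum.cong) (auto simp: elim_transform_eq)
  also have "\<dots> = (if x = y then 1 else 0) + ?E x y + ?F x y"
    using assms by (intro sum_id_plus_mult) (auto simp: elim_coupling_def)
  finally show ?thesis by simp
qed

lemma elim_blocks_commute:
  assumes "finite M" "Bg \<inter> Sg = {}" "Bh \<inter> Sh = {}" "Bg \<union> Sg \<subseteq> M" "Bh \<union> Sh \<subseteq> M"
    and "(Bg \<union> Sg) \<inter> Bh = {}" "(Bh \<union> Sh) \<inter> Bg = {}"
  shows "agree_pair M (elim_blocks M Bg Sg (elim_blocks M Bh Sh X))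
                      (elim_blocks M Bh Sh (elim_blocks M Bg Sg X))"
proof -
  let ?Pg = "elim_transform M (fst X) Bg Sg" and ?Ph = "elim_transform M (fst X) Bh Sh"
  have "agree_pair (M - Bh) (elim_blocks M Bh Sh X) X"
    using assms by (intro elim_blocks_outside) auto
  then have g_after_h: "elim_transform M (fst (elim_blocks M Bh Sh X)) Bg Sg = ?Pg"
    using assms(4,6) unfolding agree_pair_def agree_on_def by (intro elim_transform_cong) blast
  have "agree_pair (M - Bg) (elim_blocks M Bg Sg X) X"
    using assms by (intro elim_blocks_outside) auto
  then have h_after_g: "elim_transform M (fst (elim_blocks M Bg Sg X)) Bh Sh = ?Ph"
    using assms(5,7) unfolding agree_pair_def agree_on_def by (intro elim_transform_cong) blast
  have "agree_on M (mmul M ?Pg ?Ph) (mmul M ?Ph ?Pg)"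
    unfolding agree_on_def
  proof (intro ballI)
    fix x y assume "x \<in> M" "y \<in> M"
    moreover have "Sg \<inter> Bh = {}" "Sh \<inter> Bg = {}" using assms(6,7) by auto
    ultimately show "mmul M ?Pg ?Ph x y = mmul M ?Ph ?Pg x y"
      using assms(1-3) by (simp add: elim_transform_mmul)
  qed
  moreover have "elim_blocks M Bg Sg (elim_blocks M Bh Sh X) = transform_by M (mmul M ?Pg ?Ph) X"
    by (simp only: elim_blocks_def[of M Bg Sg "elim_blocks M Bh Sh X"] g_after_h)
      (simp add: elim_blocks_def transform_by_mmul)
  moreover have "elim_blocks M Bh Sh (elim_blocks M Bg Sg X) = transform_by M (mmul M ?Ph ?Pg) X"
    by (simp only: elim_blocks_def[of M Bh Sh "elim_blocks M Bg Sg X"] h_after_g)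
      (simp add: elim_blocks_def transform_by_mmul)
  ultimately show ?thesis by (simp add: transform_by_agree_on)
qed

section \<open>Reordering folds modulo an equivalence\<close>

lemma fold_rel:
  assumes "\<forall>g\<in>set L. \<forall>X Y. R X Y \<longrightarrow> R (f g X) (f g Y)" "R X Y"
  shows "R (fold f L X) (fold f L Y)"
  using assms by (induction L arbitrary: X Y) auto

lemma fold_rel_filter:
  assumes "transp R"
    and "\<forall>g\<in>set L. P g \<longrightarrow> (\<forall>X Y. R X Y \<longrightarrow> R (f g X) (f g Y))"
    and "\<forall>g\<in>set L. \<not> P g \<longrightarrow> (\<forall>X. R (f g X) X)"
    and "R X Y"
  shows "R (fold f L X) (fold f (filter P L) Y)"
  using assms(2-4)
proof (induction L arbitrary: X Y)
  case Nil
  then show ?case by simp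
next
  case (Cons g L)
  show ?case
  proof (cases "P g")
    case True
    then have "R (f g X) (f g Y)" using Cons.prems(1,3) by simp
    then show ?thesis using Cons.IH Cons.prems(1,2) True by simp
  next
    case False
    then have "R (f g X) Y" using Cons.prems transpD[OF assms(1)] by fastforce
    then show ?thesis using Cons.IH Cons.prems(1,2) False by simp
  qed
qed

lemma fold_rel_move_last:
  assumes "equivp R"
    and cong: "\<forall>g\<in>set zs. \<forall>X Y. R X Y \<longrightarrow> R (f g X) (f g Y)"
    and comm: "\<forall>w\<in>set zs. \<forall>X. R (f w (f z X)) (f z (f w X))"
  shows "R (fold f (z # zs) X) (fold f (zs @ [z]) X)"
  using cong comm
proof (induction zs arbitrary: X)
  case Nil
  then show ?case using equivp_reflp[OF assms(1)] by simp
next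
  case (Cons w ws)
  have "R (fold f ws (f w (f z X))) (fold f ws (f z (f w X)))"
    by (rule fold_rel) (use Cons.prems in auto)
  moreover have "R (fold f ws (f z (f w X))) (fold f (ws @ [z]) (f w X))"
    using Cons by simp
  ultimately show ?case using equivp_transp[OF assms(1)] by simp
qed

lemma fold_rel_perm:
  assumes "equivp R"
    and "\<forall>g\<in>set L1. \<forall>X Y. R X Y \<longrightarrow> R (f g X) (f g Y)"
    and "\<forall>g\<in>set L1. \<forall>h\<in>set L1. g \<noteq> h \<longrightarrow> Q g h \<longrightarrow> Q h g \<longrightarrow> (\<forall>X. R (f g (f h X)) (f h (f g X)))"
    and "distinct L1" "distinct L2" "set L1 = set L2" "sorted_wrt Q L1" "sorted_wrt Q L2"
  shows "R (fold f L1 X) (fold f L2 X)"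
  using assms(2-)
proof (induction L1 arbitrary: L2 rule: rev_induct)
  case Nil
  then show ?case using equivp_reflp[OF assms(1)] by simp
next
  case (snoc z xs)
  have "z \<in> set L2" using snoc.prems(5) by auto
  then obtain ys zs where L2: "L2 = ys @ z # zs" by (meson split_list)
  have zs: "w \<noteq> z" "w \<in> set xs" "Q z w" "Q w z" if "w \<in> set zs" for w
    using snoc.prems(3-7) that unfolding L2 by (auto simp: sorted_wrt_append)
  have "R (fold f (z # zs) (fold f ys X)) (fold f (zs @ [z]) (fold f ys X))"
    using snoc.prems(1,2) zs by (intro fold_rel_move_last[OF assms(1)]) auto
  then have moved: "R (fold f L2 X) (f z (fold f (ys @ zs) X))"
    unfolding L2 by simp
  have "R (fold f xs X) (fold f (ys @ zs) X)"
    using snoc.prems unfolding L2 by (intro snoc.IH) (auto simp: sorted_wrt_append)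
  then have "R (fold f (xs @ [z]) X) (f z (fold f (ys @ zs) X))"
    using snoc.prems(1) by simp
  from equivp_transp[OF assms(1) this equivp_symp[OF assms(1) moved]] show ?case .
qed

section \<open>Positions in a cluster tree\<close>

lemma subt_append: "subt t (p @ q) = Option.bind (subt t p) (\<lambda>t'. subt t' q)"
  by (induction t p rule: subt.induct) auto

lemma subt_wf_ct: "wf_ct t \<Longrightarrow> subt t p = Some t' \<Longrightarrow> wf_ct t' \<and> rcl t' \<subseteq> rcl t"
  by (induction t p rule: subt.induct) (auto split: if_splits)

lemma pos_prefix: "prefix p q \<Longrightarrow> q \<in> pos t \<Longrightarrow> p \<in> pos t"
  unfolding pos_def prefix_def by (auto simp: subt_append bind_eq_Some_conv)

lemma clu_prefix_subset:
  assumes "wf_ct t" "prefix p q" "q \<in> pos t"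
  shows "clu t q \<subseteq> clu t p"
proof -
  obtain u where q: "q = p @ u" using assms(2) by (auto simp: prefix_def)
  obtain tp where tp: "subt t p = Some tp" using pos_prefix[OF assms(2,3)] by (auto simp: pos_def)
  obtain tq where tq: "subt tp u = Some tq" using assms(3) tp by (auto simp: pos_def q subt_append)
  have "rcl tq \<subseteq> rcl tp" using subt_wf_ct[OF assms(1) tp] subt_wf_ct tq by blast
  then show ?thesis unfolding clu_def q using tp tq by (simp add: subt_append)
qed

lemma clu_subset: "cluster_tree M t \<Longrightarrow> q \<in> pos t \<Longrightarrow> clu t q \<subseteq> M"
  using clu_prefix_subset[of t "[]" q] unfolding cluster_tree_def clu_def by simp

lemma pos_snoc_Nd: "p @ [b] \<in> pos t \<Longrightarrow> \<exists>c l r. subt t p = Some (Nd c l r)"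
  by (cases "subt t p" rule: option.exhaust; cases "the (subt t p)")
    (auto simp: pos_def subt_append)

lemma pos_snoc_sibling: "p @ [b] \<in> pos t \<Longrightarrow> p @ [c] \<in> pos t"
  using pos_snoc_Nd[of p b t] unfolding pos_def by (auto simp: subt_append)

lemma clu_siblings_disjoint:
  assumes "wf_ct t" "p @ [b] \<in> pos t"
  shows "clu t (p @ [b]) \<inter> clu t (p @ [\<not> b]) = {}"
proof -
  obtain c l r where s: "subt t p = Some (Nd c l r)" using pos_snoc_Nd[OF assms(2)] by blast
  have "wf_ct (Nd c l r)" using subt_wf_ct[OF assms(1) s] by simp
  then show ?thesis unfolding clu_def using s by (cases b) (auto simp: subt_append)
qed

lemma clu_parallel_disjoint:
  assumes "wf_ct t" "p \<parallel> q" "p \<in> pos t" "q \<in> pos t"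
  shows "clu t p \<inter> clu t q = {}"
proof -
  obtain as b bs c cs where "b \<noteq> c" "p = as @ b # bs" "q = as @ c # cs"
    using parallel_decomp[OF assms(2)] by blast
  then have p: "p = (as @ [b]) @ bs" and q: "q = (as @ [\<not> b]) @ cs" by auto
  have "clu t p \<subseteq> clu t (as @ [b])" "clu t q \<subseteq> clu t (as @ [\<not> b])"
    using clu_prefix_subset[OF assms(1) prefixI[OF p] assms(3)]
      clu_prefix_subset[OF assms(1) prefixI[OF q] assms(4)] by auto
  moreover have "as @ [b] \<in> pos t" using pos_prefix[OF prefixI[OF p] assms(3)] .
  ultimately show ?thesis using clu_siblings_disjoint[OF assms(1)] by blast
qed

lemma parallel_append_left: "ys \<parallel> zs \<Longrightarrow> xs @ ys \<parallel> xs @ zs"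
  by (induction xs) (auto intro: Cons_parallelI2)

lemma sib_parallel: "prefix a r \<Longrightarrow> a \<noteq> [] \<Longrightarrow> sib a \<parallel> r"
proof -
  assume "prefix a r" "a \<noteq> []"
  then obtain w where "r = (butlast a @ [last a]) @ w" by (auto elim: prefixE)
  then have r: "r = butlast a @ last a # w" by simp
  have "[\<not> last a] \<parallel> last a # w" by (rule Cons_parallelI1) simp
  then show ?thesis unfolding sib_def r by (rule parallel_append_left)
qed

lemma sib_in_pos:
  assumes "prefix a r" "a \<noteq> []" "r \<in> pos t"
  shows "sib a \<in> pos t"
proof -
  have "butlast a @ [last a] \<in> pos t" using pos_prefix[OF assms(1,3)] assms(2) by simp
  then show ?thesis unfolding sib_def by (rule pos_snoc_sibling)
qed

lemma clu_sib_subset: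
  assumes "cluster_tree M t" "prefix a r" "a \<noteq> []" "r \<in> pos t"
  shows "clu t (sib a) \<subseteq> M - clu t a"
proof -
  have "a \<in> pos t" using pos_prefix[OF assms(2,4)] .
  then have "clu t (butlast a @ [last a]) \<inter> clu t (butlast a @ [\<not> last a]) = {}"
    using assms(1,3) by (intro clu_siblings_disjoint) (auto simp: cluster_tree_def)
  then show ?thesis
    using clu_subset[OF assms(1) sib_in_pos[OF assms(2-4)]] assms(3) by (auto simp: sib_def)
qed

section \<open>Augmented trees\<close>

lemma Bas_in_anodes:
  "Bas q \<in> anodes t r \<longleftrightarrow> (\<exists>k u. 1 \<le> k \<and> k \<le> length r \<and> q = sib (take k r) @ u \<and> q \<in> pos t)"
  unfolding anodes_def by auto

lemma Bas_in_anodes_iff: "Bas q \<in> anodes t r \<longleftrightarrow> q \<in> pos t \<and> q \<parallel> r"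
proof
  assume "Bas q \<in> anodes t r"
  then obtain k u where k: "1 \<le> k" "k \<le> length r" "q = sib (take k r) @ u" "q \<in> pos t"
    unfolding Bas_in_anodes by blast
  then obtain j where j: "k = Suc j" "j < length r" by (cases k) auto
  have q: "q = take j r @ (\<not> r ! j) # u"
    using k(3) j by (simp add: sib_def take_Suc_conv_app_nth)
  have r: "r = take j r @ r ! j # drop (Suc j) r"
    using j(2) by (rule id_take_nth_drop)
  have "(\<not> r ! j) # u \<parallel> r ! j # drop (Suc j) r" by (rule Cons_parallelI1) simp
  then have "q \<parallel> r" unfolding q by (subst r) (rule parallel_append_left)
  with k(4) show "q \<in> pos t \<and> q \<parallel> r" ..
next
  assume q: "q \<in> pos t \<and> q \<parallel> r"
  then obtain as b bs c cs where bc: "b \<noteq> c" "q = as @ b # bs" "r = as @ c # cs"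
    using parallel_decomp[of q r] by auto
  have "sib (take (Suc (length as)) r) @ bs = q"
    using bc by (simp add: sib_def)
  moreover have "1 \<le> Suc (length as)" "Suc (length as) \<le> length r" using bc by auto
  ultimately show "Bas q \<in> anodes t r" using q unfolding Bas_in_anodes by blast
qed

lemma Cmp_in_anodes_iff: "Cmp a \<in> anodes t r \<longleftrightarrow> prefix a r \<and> 2 \<le> length a"
proof
  assume "Cmp a \<in> anodes t r"
  then show "prefix a r \<and> 2 \<le> length a"
    unfolding anodes_def by (auto simp: take_is_prefix)
next
  assume a: "prefix a r \<and> 2 \<le> length a"
  then have "a = take (length a) r" "length a \<le> length r"
    by (auto simp: prefix_def)
  with a show "Cmp a \<in> anodes t r" unfolding anodes_def by blast
qed

definition child_rel :: "'a ctree \<Rightarrow> (anode \<times> anode) set" where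
  "child_rel t = {(g, h). h \<in> ach t g}"

lemma ach_Bas: "h \<in> ach t (Bas q) \<Longrightarrow> \<exists>b. h = Bas (q @ [b]) \<and> q @ [b] \<in> pos t"
  by (auto simp: pos_def subt_append split: option.splits ctree.splits)

lemma cnode_butlast_in_anodes:
  assumes ct: "cluster_tree M t" and r: "r \<in> pos t" and a: "Cmp a \<in> anodes t r"
  shows "cnode (butlast a) \<in> anodes t r \<and> acl M t (cnode (butlast a)) \<subseteq> M - clu t a"
proof -
  define p where "p = butlast a"
  have a_r: "prefix a r" "2 \<le> length a" using a by (auto simp: Cmp_in_anodes_iff)
  have "length p = length a - 1" unfolding p_def by (rule length_butlast)
  then have p_ne: "p \<noteq> []" using a_r(2) by auto
  have p_r: "prefix p r" unfolding p_def by (rule prefix_order.trans[OF prefixeq_butlast a_r(1)])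
  have "clu t a \<subseteq> clu t p"
    using ct pos_prefix[OF a_r(1) r] unfolding p_def cluster_tree_def
    by (intro clu_prefix_subset) (auto simp: prefixeq_butlast)
  show ?thesis
  proof (cases "length a = 2")
    case True
    then have "cnode (butlast a) = Bas (sib p)" by (simp add: cnode_def p_def)
    then show ?thesis
      using \<open>clu t a \<subseteq> clu t p\<close> clu_sib_subset[OF ct p_r p_ne r]
      by (auto simp: Bas_in_anodes_iff sib_parallel[OF p_r p_ne] sib_in_pos[OF p_r p_ne r])
  next
    case False
    then have "cnode (butlast a) = Cmp p" using a_r(2) by (simp add: cnode_def p_def)
    then show ?thesis
      using p_r a_r(2) False \<open>clu t a \<subseteq> clu t p\<close> by (auto simp: Cmp_in_anodes_iff p_def)
  qed
qed

lemma ach_in_anodes: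
  assumes ct: "cluster_tree M t" and r: "r \<in> pos t" and g: "g \<in> anodes t r" and h: "h \<in> ach t g"
  shows "h \<in> anodes t r \<and> acl M t h \<subseteq> acl M t g"
proof (cases g)
  case (Bas q)
  then obtain b where hb: "h = Bas (q @ [b])" "q @ [b] \<in> pos t"
    using ach_Bas h by blast
  have "q @ [b] \<parallel> r @ []"
    using g parallel_append[of q r "[b]" "[]"] by (simp add: Bas Bas_in_anodes_iff)
  moreover have "clu t (q @ [b]) \<subseteq> clu t q"
    using ct hb(2) by (intro clu_prefix_subset) (auto simp: cluster_tree_def)
  ultimately show ?thesis using hb Bas by (simp add: Bas_in_anodes_iff)
next
  case (Cmp a)
  then have a: "prefix a r" "a \<noteq> []" using g by (auto simp: Cmp_in_anodes_iff)
  have "h = Bas (sib a) \<or> h = cnode (butlast a)" using h Cmp by simp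
  then show ?thesis
  proof
    assume "h = Bas (sib a)"
    then show ?thesis
      using Cmp clu_sib_subset[OF ct a r]
      by (auto simp: Bas_in_anodes_iff sib_parallel[OF a] sib_in_pos[OF a r])
  next
    assume "h = cnode (butlast a)"
    then show ?thesis using Cmp cnode_butlast_in_anodes[OF ct r] g by auto
  qed
qed

lemma descendant_in_anodes:
  assumes "cluster_tree M t" "r \<in> pos t"
  shows "(g, h) \<in> (child_rel t)\<^sup>+ \<Longrightarrow> g \<in> anodes t r \<Longrightarrow> h \<in> anodes t r \<and> acl M t h \<subseteq> acl M t g"
proof (induction rule: trancl_induct)
  case (base h)
  then show ?case using ach_in_anodes[OF assms] by (auto simp: child_rel_def)
next
  case (step h h')
  then show ?case using ach_in_anodes[OF assms, of h h'] by (auto simp: child_rel_def)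
qed

lemma Bas_prefix_rtrancl:
  assumes "prefix q q'" "q' \<in> pos t"
  shows "(Bas q, Bas q') \<in> (child_rel t)\<^sup>*"
proof -
  obtain u where "q' = q @ u" using assms(1) by (auto simp: prefix_def)
  with assms(2) show ?thesis
  proof (induction u arbitrary: q' rule: rev_induct)
    case Nil
    then show ?case by simp
  next
    case (snoc b u)
    then have "(q @ u) @ [b] \<in> pos t" by simp
    then obtain c l r where "subt t (q @ u) = Some (Nd c l r)" using pos_snoc_Nd by blast
    then have "(Bas (q @ u), Bas (q @ u @ [b])) \<in> child_rel t"
      by (cases b) (auto simp: child_rel_def)
    moreover have "(Bas q, Bas (q @ u)) \<in> (child_rel t)\<^sup>*"
      using snoc.IH pos_prefix[OF prefixI \<open>(q @ u) @ [b] \<in> pos t\<close>] by simp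
    ultimately show ?case using snoc.prems(2) by simp
  qed
qed

lemma Cmp_prefix_rtrancl:
  assumes "prefix a' a" "2 \<le> length a'"
  shows "(Cmp a, Cmp a') \<in> (child_rel t)\<^sup>*"
proof -
  obtain u where "a = a' @ u" using assms(1) by (auto simp: prefix_def)
  then show ?thesis
  proof (induction u arbitrary: a rule: rev_induct)
    case Nil
    then show ?case by simp
  next
    case (snoc b u)
    have "cnode (a' @ u) = Cmp (a' @ u)" using assms(2) by (simp add: cnode_def)
    then have "(Cmp a, Cmp (a' @ u)) \<in> child_rel t"
      using snoc.prems by (auto simp: child_rel_def butlast_append)
    with snoc.IH show ?case by (simp add: converse_rtrancl_into_rtrancl)
  qed
qed

lemma Cmp_sib_trancl:
  assumes "prefix p a" "p \<noteq> []" "2 \<le> length a"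
  shows "(Cmp a, Bas (sib p)) \<in> (child_rel t)\<^sup>+"
proof (cases "2 \<le> length p")
  case True
  with assms(1) have "(Cmp a, Cmp p) \<in> (child_rel t)\<^sup>*" by (rule Cmp_prefix_rtrancl)
  moreover have "(Cmp p, Bas (sib p)) \<in> child_rel t" by (simp add: child_rel_def)
  ultimately show ?thesis by simp
next
  case False
  then have "length p = 1" using assms(2) length_greater_0_conv[of p] by linarith
  then have p: "p = take 1 a" using assms(1) by (auto simp: prefix_def)
  have "(Cmp a, Cmp (take 2 a)) \<in> (child_rel t)\<^sup>*"
    using assms(3) by (intro Cmp_prefix_rtrancl) (auto simp: take_is_prefix)
  moreover have "butlast (take 2 a) = p" "length (take 1 a) = 1"
    using assms(3) p by (auto simp: butlast_take)
  then have "(Cmp (take 2 a), Bas (sib p)) \<in> child_rel t"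
    using p by (simp add: child_rel_def cnode_def)
  ultimately show ?thesis by simp
qed

lemma Cmp_Bas_related_or_disjoint:
  assumes ct: "cluster_tree M t" and a: "Cmp a \<in> anodes t r" and q: "Bas q \<in> anodes t r"
  shows "(Cmp a, Bas q) \<in> (child_rel t)\<^sup>+ \<or> acl M t (Cmp a) \<inter> acl M t (Bas q) = {}"
proof -
  have a_r: "prefix a r" "2 \<le> length a" and q_r: "q \<in> pos t" "q \<parallel> r"
    using a q by (auto simp: Cmp_in_anodes_iff Bas_in_anodes_iff)
  obtain as b bs c cs where bc: "b \<noteq> c" "q = as @ b # bs" "r = as @ c # cs"
    using parallel_decomp[of q r] q_r(2) by auto
  show ?thesis
  proof (cases "length as < length a")
    case True
    have "prefix (as @ [c]) r" by (rule prefixI[where zs=cs]) (simp add: bc(3))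
    then have "prefix (as @ [c]) a" using prefix_length_prefix[OF _ a_r(1)] True by simp
    then have "(Cmp a, Bas (sib (as @ [c]))) \<in> (child_rel t)\<^sup>+"
      using Cmp_sib_trancl a_r(2) by blast
    moreover have "sib (as @ [c]) = as @ [b]" using bc(1) by (simp add: sib_def)
    moreover have "prefix (as @ [b]) q" by (rule prefixI[where zs=bs]) (simp add: bc(2))
    then have "(Bas (as @ [b]), Bas q) \<in> (child_rel t)\<^sup>*"
      using q_r(1) by (rule Bas_prefix_rtrancl)
    ultimately show ?thesis by (simp add: trancl_rtrancl_trancl)
  next
    case False
    have "prefix as r" by (rule prefixI[where zs="c # cs"]) (simp add: bc(3))
    then have "prefix a as" using prefix_length_prefix[OF a_r(1)] False by simp
    moreover have "prefix as q" by (rule prefixI[where zs="b # bs"]) (simp add: bc(2))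
    ultimately have "prefix a q" by (rule prefix_order.trans)
    then have "clu t q \<subseteq> clu t a"
      using ct q_r(1) clu_prefix_subset unfolding cluster_tree_def by blast
    then show ?thesis by auto
  qed
qed

lemma anodes_related_or_disjoint:
  assumes ct: "cluster_tree M t" and g: "g \<in> anodes t r" and h: "h \<in> anodes t r"
  shows "g = h \<or> (g, h) \<in> (child_rel t)\<^sup>+ \<or> (h, g) \<in> (child_rel t)\<^sup>+ \<or> acl M t g \<inter> acl M t h = {}"
proof (cases g; cases h)
  fix q q' assume gh: "g = Bas q" "h = Bas q'"
  then have pos: "q \<in> pos t" "q' \<in> pos t" using g h by (auto simp: Bas_in_anodes_iff)
  show ?thesis
  proof (cases q q' rule: prefix_cases)
    case 1
    from this pos(2) have "(g, h) \<in> (child_rel t)\<^sup>*" unfolding gh by (rule Bas_prefix_rtrancl)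
    then show ?thesis by (auto simp: rtrancl_eq_or_trancl)
  next
    case 2
    then have "prefix q' q" by (rule prefix_order.less_imp_le)
    from this pos(1) have "(h, g) \<in> (child_rel t)\<^sup>*" unfolding gh by (rule Bas_prefix_rtrancl)
    then show ?thesis by (auto simp: rtrancl_eq_or_trancl)
  next
    case 3
    with pos ct show ?thesis unfolding gh by (auto simp: cluster_tree_def clu_parallel_disjoint)
  qed
next
  fix q a assume gh: "g = Bas q" "h = Cmp a"
  then show ?thesis using Cmp_Bas_related_or_disjoint[OF ct, of a r q] g h by auto
next
  fix a q assume gh: "g = Cmp a" "h = Bas q"
  then show ?thesis using Cmp_Bas_related_or_disjoint[OF ct, of a r q] g h by auto
next
  fix a a' assume gh: "g = Cmp a" "h = Cmp a'"
  then have "prefix a r" "prefix a' r" "2 \<le> length a" "2 \<le> length a'"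
    using g h by (auto simp: Cmp_in_anodes_iff)
  then have "(g, h) \<in> (child_rel t)\<^sup>* \<or> (h, g) \<in> (child_rel t)\<^sup>*"
    unfolding gh using prefix_same_cases Cmp_prefix_rtrancl by blast
  then show ?thesis by (auto simp: rtrancl_eq_or_trancl)
qed

section \<open>Elimination along a consistent ordering\<close>

lemma bnd_priv_disjoint: "bnd M A (acl M t g) \<inter> priv M A t g = {}"
  unfolding bnd_def priv_def inn_def by auto

lemma bnd_priv_subset: "bnd M A (acl M t g) \<union> priv M A t g \<subseteq> acl M t g"
  unfolding bnd_def priv_def inn_def by auto

lemma acl_subset: "cluster_tree M t \<Longrightarrow> g \<in> anodes t r \<Longrightarrow> acl M t g \<subseteq> M"
  by (cases g) (auto simp: Bas_in_anodes_iff dest: clu_subset)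

lemma elim_step_outside:
  assumes "finite M" "C \<subseteq> M" "acl M t g \<inter> C = {}"
  shows "agree_pair C (elim_step M A t g X) X"
  unfolding elim_step_eq_elim_blocks
  using bnd_priv_subset[of M A t g] assms
  by (intro elim_blocks_outside bnd_priv_disjoint) auto

lemma elim_step_agree_pair:
  assumes "finite M" "acl M t g \<subseteq> C" "C \<subseteq> M" "agree_pair C X Y"
  shows "agree_pair C (elim_step M A t g X) (elim_step M A t g Y)"
  unfolding elim_step_eq_elim_blocks
  using bnd_priv_subset[of M A t g] assms
  by (intro elim_blocks_agree_pair bnd_priv_disjoint) auto

lemma elim_step_commute:
  assumes "finite M" "acl M t g \<subseteq> M" "acl M t h \<subseteq> M" "acl M t g \<inter> acl M t h = {}"
  shows "agree_pair M (elim_step M A t g (elim_step M A t h X)) (elim_step M A t h (elim_step M A t g X))"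
  unfolding elim_step_eq_elim_blocks
  using bnd_priv_subset[of M A t g] bnd_priv_subset[of M A t h] assms
  by (intro elim_blocks_commute bnd_priv_disjoint) auto

lemma consistent_ordering_sorted:
  assumes "consistent_ordering t r ord"
  shows "sorted_wrt (\<lambda>g h. (g, h) \<notin> (child_rel t)\<^sup>+) ord"
  unfolding sorted_wrt_iff_nth_less
proof (intro allI impI)
  fix i j assume ij: "i < j" "j < length ord"
  then have "(ord ! i, ord ! j) \<in> (child_rel t)\<^sup>+ \<longrightarrow> j < i"
    using assms unfolding consistent_ordering_def child_rel_def by simp
  with ij(1) show "(ord ! i, ord ! j) \<notin> (child_rel t)\<^sup>+" by auto
qed

lemma sig_plus_fold:
  assumes "distinct ord" "n < length ord" "ord ! n = g"
  shows "sig_plus M A Sig t ord g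
    = snd (elim_step M A t g (fold (elim_step M A t) (take n ord) (A, Sig)))"
proof -
  have "(THE n. n < length ord \<and> ord ! n = g) = n"
    using assms by (intro the_equality) (auto simp: nth_eq_iff_index_eq)
  then show ?thesis
    unfolding sig_plus_def elim_run_def foldl_conv_fold
    using assms(2,3) by (simp add: take_Suc_conv_app_nth)
qed

lemma consistent_ordering_take:
  assumes ord: "consistent_ordering t r ord" and n: "n < length ord" "ord ! n = i"
  shows "{h. (i, h) \<in> (child_rel t)\<^sup>+} \<inter> anodes t r \<subseteq> set (take n ord)"
    and "g \<in> set (take n ord) \<Longrightarrow> g \<in> anodes t r \<and> g \<noteq> i \<and> (g, i) \<notin> (child_rel t)\<^sup>+"
proof -
  have dist: "distinct ord" and set_ord: "set ord = anodes t r"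
    and before: "\<And>j k. j < length ord \<Longrightarrow> k < length ord \<Longrightarrow> (ord ! j, ord ! k) \<in> (child_rel t)\<^sup>+ \<Longrightarrow> k < j"
    using ord unfolding consistent_ordering_def child_rel_def by auto
  show "{h. (i, h) \<in> (child_rel t)\<^sup>+} \<inter> anodes t r \<subseteq> set (take n ord)"
  proof
    fix h assume h: "h \<in> {h. (i, h) \<in> (child_rel t)\<^sup>+} \<inter> anodes t r"
    then obtain k where k: "k < length ord" "ord ! k = h" using set_ord by (metis IntD2 in_set_conv_nth)
    then have "k < n" using before[of n k] n h by simp
    then show "h \<in> set (take n ord)" using k by (auto simp: in_set_conv_nth intro!: exI[of _ k])
  qed
  assume "g \<in> set (take n ord)"
  then obtain k where k: "k < n" "ord ! k = g" using n(1) by (auto simp: in_set_conv_nth)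
  then have "g \<noteq> i" using n dist by (auto simp: nth_eq_iff_index_eq)
  moreover have "(g, i) \<notin> (child_rel t)\<^sup>+" using before[of k n] k n by auto
  moreover have "g \<in> anodes t r" using k n set_ord by (metis nth_mem order.strict_trans)
  ultimately show "g \<in> anodes t r \<and> g \<noteq> i \<and> (g, i) \<notin> (child_rel t)\<^sup>+" by blast
qed

lemma sig_plus_eq_descendant_elimination:
  assumes fin: "finite M" and ct: "cluster_tree M t" and r: "r \<in> pos t"
    and ord: "consistent_ordering t r ord" and i: "i \<in> anodes t r"
  obtains L where "set L = {h. (i, h) \<in> (child_rel t)\<^sup>+}" "distinct L"
    "sorted_wrt (\<lambda>g h. (g, h) \<notin> (child_rel t)\<^sup>+) L"
    "agree_on (acl M t i) (sig_plus M A Sig t ord i)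
       (snd (elim_step M A t i (fold (elim_step M A t) L (A, Sig))))"
proof -
  let ?f = "elim_step M A t" and ?C = "acl M t i" and ?D = "{h. (i, h) \<in> (child_rel t)\<^sup>+}"
  have dist: "distinct ord" using ord unfolding consistent_ordering_def by simp
  obtain n where n: "n < length ord" "ord ! n = i"
    using i ord unfolding consistent_ordering_def by (metis in_set_conv_nth)
  define L where "L = filter (\<lambda>g. g \<in> ?D) (take n ord)"
  have C: "?C \<subseteq> M" using acl_subset[OF ct i] .
  have desc: "h \<in> anodes t r \<and> acl M t h \<subseteq> ?C" if "h \<in> ?D" for h
    using descendant_in_anodes[OF ct r, of i h] that i by auto
  then have "set L = ?D" using consistent_ordering_take(1)[OF ord n] by (auto simp: L_def)
  moreover have "distinct L" using dist by (simp add: L_def)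
  moreover have "sorted_wrt (\<lambda>g h. (g, h) \<notin> (child_rel t)\<^sup>+) L"
    using consistent_ordering_sorted[OF ord] unfolding L_def
    by (intro sorted_wrt_filter) (simp add: sorted_wrt_take)
  moreover have "agree_pair ?C (fold ?f (take n ord) (A, Sig)) (fold ?f L (A, Sig))"
    unfolding L_def
  proof (rule fold_rel_filter)
    show "transp (agree_pair ?C)" using equivp_agree_pair by (rule equivp_imp_transp)
    show "\<forall>g\<in>set (take n ord). g \<in> ?D \<longrightarrow> (\<forall>X Y. agree_pair ?C X Y \<longrightarrow> agree_pair ?C (?f g X) (?f g Y))"
      using desc by (auto intro!: elim_step_agree_pair[OF fin _ C])
    show "\<forall>g\<in>set (take n ord). g \<notin> ?D \<longrightarrow> (\<forall>X. agree_pair ?C (?f g X) X)"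
    proof (intro ballI impI allI)
      fix g X assume g: "g \<in> set (take n ord)" "g \<notin> ?D"
      then have "acl M t g \<inter> ?C = {}"
        using consistent_ordering_take(2)[OF ord n g(1)] anodes_related_or_disjoint[OF ct _ i, of g] by auto
      then show "agree_pair ?C (?f g X) X" by (rule elim_step_outside[OF fin C])
    qed
    show "agree_pair ?C (A, Sig) (A, Sig)" using equivp_agree_pair by (rule equivp_reflp)
  qed
  then have "agree_pair ?C (?f i (fold ?f (take n ord) (A, Sig))) (?f i (fold ?f L (A, Sig)))"
    using fin C by (intro elim_step_agree_pair) auto
  then have "agree_on ?C (sig_plus M A Sig t ord i) (snd (?f i (fold ?f L (A, Sig))))"
    unfolding sig_plus_fold[OF dist n] agree_pair_def by (rule conjunct2)
  ultimately show ?thesis using that by blast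
qed

lemma descendant_elimination_order_irrelevant:
  assumes fin: "finite M" and ct: "cluster_tree M t" and r: "r \<in> pos t" and i: "i \<in> anodes t r"
    and L: "set L = {h. (i, h) \<in> (child_rel t)\<^sup>+}" "set L' = set L" "distinct L" "distinct L'"
    and sorted: "sorted_wrt (\<lambda>g h. (g, h) \<notin> (child_rel t)\<^sup>+) L" "sorted_wrt (\<lambda>g h. (g, h) \<notin> (child_rel t)\<^sup>+) L'"
  shows "agree_pair (acl M t i) (fold (elim_step M A t) L X) (fold (elim_step M A t) L' X)"
proof (rule fold_rel_perm[OF equivp_agree_pair _ _ L(3,4) L(2)[symmetric] sorted])
  have desc: "g \<in> anodes t r \<and> acl M t g \<subseteq> acl M t i" if "g \<in> set L" for g
    using descendant_in_anodes[OF ct r, of i g] that i L(1) by auto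
  have C: "acl M t i \<subseteq> M" using acl_subset[OF ct i] .
  show "\<forall>g\<in>set L. \<forall>X Y. agree_pair (acl M t i) X Y \<longrightarrow>
      agree_pair (acl M t i) (elim_step M A t g X) (elim_step M A t g Y)"
    using desc by (auto intro!: elim_step_agree_pair[OF fin _ C])
  show "\<forall>g\<in>set L. \<forall>h\<in>set L. g \<noteq> h \<longrightarrow> (g, h) \<notin> (child_rel t)\<^sup>+ \<longrightarrow> (h, g) \<notin> (child_rel t)\<^sup>+ \<longrightarrow>
      (\<forall>X. agree_pair (acl M t i) (elim_step M A t g (elim_step M A t h X)) (elim_step M A t h (elim_step M A t g X)))"
  proof (intro ballI impI allI)
    fix g h X assume gh: "g \<in> set L" "h \<in> set L" "g \<noteq> h"
      "(g, h) \<notin> (child_rel t)\<^sup>+" "(h, g) \<notin> (child_rel t)\<^sup>+"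
    then have "acl M t g \<inter> acl M t h = {}"
      using anodes_related_or_disjoint[OF ct, of g r h] desc by auto
    then have "agree_pair M (elim_step M A t g (elim_step M A t h X)) (elim_step M A t h (elim_step M A t g X))"
      using fin acl_subset[OF ct] desc gh(1,2) by (intro elim_step_commute) auto
    then show "agree_pair (acl M t i) (elim_step M A t g (elim_step M A t h X)) (elim_step M A t h (elim_step M A t g X))"
      using C by (rule agree_pair_subset)
  qed
qed

theorem corollary4:
  fixes M :: "'a set" and A Sig :: "'a cmat" and t :: "'a ctree"
    and r s :: "bool list" and ordr ords :: "anode list"
  assumes "finite M"
    and "invertible_on M A"
    and "\<forall>i\<in>M. \<forall>j\<in>M. A i j \<noteq> 0 \<longleftrightarrow> A j i \<noteq> 0"
    and "\<forall>i\<in>M. \<forall>j\<in>M. i \<noteq> j \<and> A i j = 0 \<longrightarrow> Sig i j = 0"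
    and "cluster_tree M t"
    and "is_leaf_pos t r" and "is_leaf_pos t s"
    and "consistent_ordering t r ordr" and "consistent_ordering t s ords"
    and "elim_ok M A Sig t ordr" and "elim_ok M A Sig t ords"
    and "i \<in> anodes t r" and "i \<in> anodes t s"
  shows "\<forall>p\<in>bnd M A (acl M t i). \<forall>q\<in>bnd M A (acl M t i).
           sig_plus M A Sig t ordr i p q = sig_plus M A Sig t ords i p q"
proof -
  note fin = assms(1) and ct = assms(5)
  let ?f = "elim_step M A t" and ?C = "acl M t i"
  have r: "r \<in> pos t" and s: "s \<in> pos t"
    using assms(6,7) unfolding is_leaf_pos_def pos_def by auto
  obtain Lr where Lr: "set Lr = {h. (i, h) \<in> (child_rel t)\<^sup>+}" "distinct Lr"
      "sorted_wrt (\<lambda>g h. (g, h) \<notin> (child_rel t)\<^sup>+) Lr"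
      "agree_on ?C (sig_plus M A Sig t ordr i) (snd (?f i (fold ?f Lr (A, Sig))))"
    using sig_plus_eq_descendant_elimination[OF fin ct r assms(8,12)] .
  obtain Ls where Ls: "set Ls = {h. (i, h) \<in> (child_rel t)\<^sup>+}" "distinct Ls"
      "sorted_wrt (\<lambda>g h. (g, h) \<notin> (child_rel t)\<^sup>+) Ls"
      "agree_on ?C (sig_plus M A Sig t ords i) (snd (?f i (fold ?f Ls (A, Sig))))"
    using sig_plus_eq_descendant_elimination[OF fin ct s assms(9,13)] .
  have "agree_pair ?C (fold ?f Lr (A, Sig)) (fold ?f Ls (A, Sig))"
    using Lr Ls by (intro descendant_elimination_order_irrelevant[OF fin ct r assms(12)]) auto
  then have "agree_pair ?C (?f i (fold ?f Lr (A, Sig))) (?f i (fold ?f Ls (A, Sig)))"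
    using acl_subset[OF ct assms(12)] by (intro elim_step_agree_pair[OF fin]) auto
  then have "agree_on ?C (sig_plus M A Sig t ordr i) (sig_plus M A Sig t ords i)"
    using Lr(4) Ls(4) unfolding agree_pair_def agree_on_def by simp
  then show ?thesis
    using bnd_priv_subset[of M A t i] unfolding agree_on_def by blast
qed

end
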